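(* Let $r\in(0,1)$, $b\in(-1,1)$, $\lambda(r)=\ln\frac{1+r}{1-r}$ and $a=\tan\frac{b\pi}{4}$. Let $\overline{S}_{\lambda(r)}(b)=\{z\in\mathbb{S}: d_{\mathbb{S}}(z,b)\leqslant\lambda(r)\}$. Then $$\{\operatorname{Re} z: z\in\overline{S}_{\lambda(r)}(b)\}=[m_b(r),M_b(r)],$$ where $m_b(r)=\frac{4}{\pi}\arctan\frac{a-r}{1-ar}$ and $M_b(r)=\frac{4}{\pi}\arctan\frac{a+r}{1+ar}$.
   Context: $\mathbb{S}=\{z\in\mathbb{C}:-1<\operatorname{Re} z<1\}$. The hyperbolic density of $\mathbb{S}$ is $\rho_{\mathbb{S}}(z)=\frac{\pi}{2}\big/\cos\left(\frac{\pi}{2}\operatorname{Re} z\right)$ and $d_{\mathbb{S}}(z_1,z_2)=\inf_\gamma\int_\gamma\rho_{\mathbb{S}}(z)|dz|$ over $C^1$ curves $\gamma$ in $\mathbb{S}$ joining $z_1$ to $z_2$. *)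

theory Defs
  imports "HOL-Analysis.Analysis"
begin

definition strip :: "complex set" where
  "strip = {z. -1 < Re z \<and> Re z < 1}"

definition rho_S :: "complex \<Rightarrow> real" where
  "rho_S z = (pi / 2) / cos (pi / 2 * Re z)"

definition hyp_length :: "(real \<Rightarrow> complex) \<Rightarrow> real" where
  "hyp_length g = integral {0..1} (\<lambda>t. rho_S (g t) * norm (vector_derivative g (at t within {0..1})))"

definition strip_curves :: "complex \<Rightarrow> complex \<Rightarrow> (real \<Rightarrow> complex) set" where
  "strip_curves z1 z2 = {g. g C1_differentiable_on {0..1} \<and> g ` {0..1} \<subseteq> strip
                            \<and> g 0 = z1 \<and> g 1 = z2}"

definition d_S :: "complex \<Rightarrow> complex \<Rightarrow> real" where
  "d_S z1 z2 = (INF g \<in> strip_curves z1 z2. hyp_length g)"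

end

(*
  On the real diameter, F x = 2 artanh (tan (pi x / 4)) satisfies F' x = rho_S x. For any curve g
  from z to w in the strip, F (Re w) - F (Re z) is the integral of rho_S (g t) * Re (g' t),
  which is at most the hyperbolic length of g, with equality for the real segment. Hence
  d_S x b = |F x - F b| on the real axis, the real parts of the closed ball of radius
  lambda(r) around b form the interval F^-1 [F b - lambda(r), F b + lambda(r)], and since
  lambda(r) = 2 artanh r and F b = 2 artanh a, the addition formula for tanh gives its endpoints.
*)
theory Submission
  imports Defs
begin

lemma tanh_artanh_real:
  fixes u :: real
  assumes "\<bar>u\<bar> < 1"
  shows "tanh (artanh u) = u"
proof -
  have pos: "0 < 1 + u" "0 < 1 - u" using assms by auto
  have "- 2 * artanh u = - ln ((1 + u) / (1 - u))"
    by (simp add: artanh_def)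
  then have e: "exp (- 2 * artanh u) = (1 - u) / (1 + u)"
    using pos by (simp add: exp_minus)
  have "tanh (artanh u) = (1 - (1 - u) / (1 + u)) / (1 + (1 - u) / (1 + u))"
    unfolding tanh_real_altdef e ..
  also have "\<dots> = u"
    using pos by (simp add: field_simps)
  finally show ?thesis .
qed

lemma tanh_artanh_add:
  fixes u v :: real
  assumes "\<bar>u\<bar> < 1" "\<bar>v\<bar> < 1"
  shows "tanh (artanh u + artanh v) = (u + v) / (1 + u * v)"
  using assms by (simp add: tanh_add tanh_artanh_real)

lemma abs_pi_mult_lt:
  fixes x :: real
  assumes "\<bar>x\<bar> < 1"
  shows "\<bar>pi * x\<bar> < pi"
  using mult_strict_left_mono[OF assms pi_gt_zero] by (simp add: abs_mult)

lemma abs_tan_quarter_pi_lt_1: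
  fixes x :: real
  assumes "\<bar>x\<bar> < 1"
  shows "\<bar>tan (pi * x / 4)\<bar> < 1"
proof -
  have "-(pi / 4) < pi * x / 4" "pi * x / 4 < pi / 4"
    using abs_pi_mult_lt[OF assms] by (auto simp: abs_less_iff)
  then have "tan (-(pi / 4)) < tan (pi * x / 4)" "tan (pi * x / 4) < tan (pi / 4)"
    using pi_gt_zero by (intro tan_monotone; linarith)+
  then show ?thesis by (simp add: tan_45 tan_minus)
qed

lemma cos_half_pi_pos:
  fixes x :: real
  assumes "\<bar>x\<bar> < 1"
  shows "0 < cos (pi / 2 * x)"
  using abs_pi_mult_lt[OF assms] by (intro cos_gt_zero_pi) (auto simp: abs_less_iff)

text \<open>\<open>z \<mapsto> tan (pi z / 4)\<close> maps the strip conformally onto the unit disc, where the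
  hyperbolic distance from 0 to \<open>w\<close> is \<open>2 artanh \<bar>w\<bar>\<close>; so \<open>strip_coord x\<close> is the signed
  hyperbolic distance from 0 to the real point \<open>x\<close>.\<close>

definition strip_coord :: "real \<Rightarrow> real" where
  "strip_coord x = 2 * artanh (tan (pi * x / 4))"

definition strip_coord_inv :: "real \<Rightarrow> real" where
  "strip_coord_inv s = 4 / pi * arctan (tanh (s / 2))"

lemma strip_coord_inv_strip_coord:
  assumes "\<bar>x\<bar> < 1"
  shows "strip_coord_inv (strip_coord x) = x"
proof -
  have "\<bar>pi * x / 4\<bar> < pi / 2"
    using abs_pi_mult_lt[OF assms] by simp
  then show ?thesis
    using abs_tan_quarter_pi_lt_1[OF assms]
    by (simp add: strip_coord_def strip_coord_inv_def tanh_artanh_real arctan_tan abs_less_iff)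
qed

lemma abs_strip_coord_inv_lt_1: "\<bar>strip_coord_inv s\<bar> < 1"
proof -
  have "arctan (-1) < arctan (tanh (s / 2))" "arctan (tanh (s / 2)) < arctan 1"
    by (simp_all only: arctan_less_iff tanh_real_lt_1 tanh_real_gt_neg1)
  then have "\<bar>arctan (tanh (s / 2))\<bar> < pi / 4"
    unfolding arctan_one arctan_minus abs_less_iff by linarith
  then show ?thesis
    using pi_gt_zero by (simp add: strip_coord_inv_def abs_mult field_simps)
qed

lemma strip_coord_inv_le_iff [simp]: "strip_coord_inv s \<le> strip_coord_inv t \<longleftrightarrow> s \<le> t"
  using pi_gt_zero by (simp add: strip_coord_inv_def arctan_le_iff divide_le_cancel)

lemma strip_coord_has_real_derivative:
  assumes "\<bar>x\<bar> < 1"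
  shows "(strip_coord has_real_derivative rho_S (of_real x)) (at x)"
proof -
  let ?t = "pi * x / 4"
  have tan: "\<bar>tan ?t\<bar> < 1"
    using abs_tan_quarter_pi_lt_1[OF assms] .
  have cos: "cos ?t \<noteq> 0"
    using cos_half_pi_pos[of "x / 2"] assms by simp
  have double: "cos ?t ^ 2 - sin ?t ^ 2 = cos (pi / 2 * x)"
    using cos_double[of ?t] by simp
  then have double_pos: "cos ?t ^ 2 - sin ?t ^ 2 \<noteq> 0"
    using cos_half_pi_pos[OF assms] by simp
  have "((\<lambda>x. tan (pi * x / 4)) has_real_derivative inverse (cos ?t ^ 2) * (pi / 4)) (at x)"
    using cos by (auto intro!: derivative_eq_intros)
  from DERIV_chain2[OF artanh_real_has_field_derivative[OF tan] this]
  have "(strip_coord has_real_derivative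
          2 * (1 / (1 - tan ?t ^ 2) * (inverse (cos ?t ^ 2) * (pi / 4)))) (at x)"
    unfolding strip_coord_def [abs_def] by (rule DERIV_cmult)
  also have "2 * (1 / (1 - tan ?t ^ 2) * (inverse (cos ?t ^ 2) * (pi / 4)))
             = (pi / 2) / (cos ?t ^ 2 - sin ?t ^ 2)"
    using cos double_pos by (simp add: tan_def power_divide field_simps)
  also have "\<dots> = rho_S (of_real x)"
    by (simp add: rho_S_def double)
  finally show ?thesis .
qed

lemma rho_S_of_real_Re: "rho_S (of_real (Re z)) = rho_S z"
  by (simp add: rho_S_def)

lemma mem_strip_iff: "z \<in> strip \<longleftrightarrow> \<bar>Re z\<bar> < 1"
  by (auto simp: strip_def abs_less_iff)

lemma rho_S_pos: "z \<in> strip \<Longrightarrow> 0 < rho_S z"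
  using cos_half_pi_pos[of "Re z"] pi_gt_zero by (simp add: rho_S_def mem_strip_iff)

lemma continuous_on_rho_S: "continuous_on strip rho_S"
proof -
  have "\<forall>z\<in>strip. cos (pi / 2 * Re z) \<noteq> 0"
    using cos_half_pi_pos by (force simp: mem_strip_iff)
  then show ?thesis
    unfolding rho_S_def [abs_def] by (intro continuous_intros)
qed

lemma convex_strip: "convex strip"
proof -
  have "strip = {z. Re z > -1} \<inter> {z. Re z < 1}"
    by (auto simp: strip_def)
  then show ?thesis
    using convex_Int[OF convex_halfspace_Re_gt convex_halfspace_Re_lt] by metis
qed

lemma linepath_in_strip_curves:
  assumes "z \<in> strip" "w \<in> strip"
  shows "linepath z w \<in> strip_curves z w"
proof -
  have "linepath z w C1_differentiable_on {0..1}"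
    unfolding linepath_def by (intro derivative_intros)
  moreover have "linepath z w ` {0..1} \<subseteq> strip"
    using convex_contains_segment[of strip] convex_strip assms
    by (metis path_image_def path_image_linepath)
  ultimately show ?thesis
    by (simp add: strip_curves_def linepath_0' linepath_1')
qed

lemma strip_coord_Re_has_vector_derivative:
  assumes "g t \<in> strip" "(g has_vector_derivative g') (at t within S)"
  shows "((\<lambda>t. strip_coord (Re (g t))) has_vector_derivative rho_S (g t) * Re g') (at t within S)"
proof -
  have "\<bar>Re (g t)\<bar> < 1"
    using assms(1) by (simp add: mem_strip_iff)
  from DERIV_chain2[OF strip_coord_has_real_derivative[OF this]
                      has_field_derivative_Re[OF assms(2)]]
  show ?thesis
    by (simp add: has_real_derivative_iff_has_vector_derivative rho_S_of_real_Re)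
qed

lemma strip_coord_Re_has_integral:
  assumes "\<And>t. t \<in> {0..1} \<Longrightarrow> (g has_vector_derivative g' t) (at t within {0..1})"
    and "g ` {0..1} \<subseteq> strip"
  shows "((\<lambda>t. rho_S (g t) * Re (g' t)) has_integral
           strip_coord (Re (g 1)) - strip_coord (Re (g 0))) {0..1}"
  using assms by (intro fundamental_theorem_of_calculus strip_coord_Re_has_vector_derivative) auto

lemma strip_coord_diff_le_hyp_length:
  assumes "g \<in> strip_curves z w"
  shows "\<bar>strip_coord (Re w) - strip_coord (Re z)\<bar> \<le> hyp_length g"
proof -
  from assms have C1: "g C1_differentiable_on {0..1}" and im: "g ` {0..1} \<subseteq> strip"
    and ends: "g 0 = z" "g 1 = w"
    by (auto simp: strip_curves_def)
  from C1 obtain D where D: "\<And>t. t \<in> {0..1} \<Longrightarrow> (g has_vector_derivative D t) (at t)"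
    and cont_D: "continuous_on {0..1} D"
    unfolding C1_differentiable_on_def by blast
  have D_within: "(g has_vector_derivative D t) (at t within {0..1})" if "t \<in> {0..1}" for t
    using D[OF that] by (rule has_vector_derivative_at_within)
  have vd: "vector_derivative g (at t within {0..1}) = D t" if "t \<in> {0..1}" for t
    using vector_derivative_within_cbox[of 0 1 t g "D t"] D_within[OF that] that by simp
  define k where "k t = rho_S (g t) * norm (D t)" for t
  have "continuous_on {0..1} k"
    unfolding k_def using C1_differentiable_imp_continuous_on[OF C1] cont_D im
    by (intro continuous_intros continuous_on_compose2[OF continuous_on_rho_S]) auto
  then have k_int: "k integrable_on {0..1}"
    by (simp add: integrable_continuous_real)
  have k_bound: "norm (rho_S (g t) * Re (D t)) \<le> k t" if "t \<in> {0..1}" for t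
  proof -
    have "0 < rho_S (g t)"
      using rho_S_pos im that by blast
    then show ?thesis
      by (simp add: k_def abs_mult abs_Re_le_cmod mult_left_mono)
  qed
  have ftc: "((\<lambda>t. rho_S (g t) * Re (D t)) has_integral
               strip_coord (Re w) - strip_coord (Re z)) {0..1}"
    using strip_coord_Re_has_integral[of g D] D_within im ends by simp
  have "norm (strip_coord (Re w) - strip_coord (Re z)) \<le> integral {0..1} k"
    unfolding integral_unique[OF ftc, symmetric]
    using has_integral_integrable[OF ftc] k_int k_bound by (rule integral_norm_bound_integral)
  moreover have "hyp_length g = integral {0..1} k"
    unfolding hyp_length_def k_def by (rule integral_cong) (simp add: vd)
  ultimately show ?thesis
    by simp
qed

lemma hyp_length_real_linepath_le:
  assumes "\<bar>x\<bar> < 1" "\<bar>y\<bar> < 1"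
  shows "hyp_length (linepath (of_real x) (of_real y)) \<le> \<bar>strip_coord y - strip_coord x\<bar>"
proof -
  let ?g = "linepath (complex_of_real x) (of_real y)"
  have "?g \<in> strip_curves (of_real x) (of_real y)"
    using assms by (intro linepath_in_strip_curves) (simp_all add: mem_strip_iff)
  then have "((\<lambda>t. rho_S (?g t) * (y - x)) has_integral strip_coord y - strip_coord x) {0..1}"
    using strip_coord_Re_has_integral[of ?g "\<lambda>_. of_real y - of_real x"]
    by (simp add: strip_curves_def has_vector_derivative_linepath_within linepath_0' linepath_1')
  from has_integral_mult_left[OF this, where c = "sgn (y - x)"]
  have int: "((\<lambda>t. rho_S (?g t) * \<bar>y - x\<bar>) has_integral
               (strip_coord y - strip_coord x) * sgn (y - x)) {0..1}"
    by (simp only: mult.assoc abs_sgn)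
  have "hyp_length ?g = integral {0..1} (\<lambda>t. rho_S (?g t) * \<bar>y - x\<bar>)"
    unfolding hyp_length_def
    by (rule integral_cong) (simp add: vector_derivative_linepath_within flip: of_real_diff)
  also have "\<dots> = (strip_coord y - strip_coord x) * sgn (y - x)"
    using int by (rule integral_unique)
  also have "\<dots> \<le> \<bar>strip_coord y - strip_coord x\<bar>"
    by (auto simp: sgn_if abs_if)
  finally show ?thesis .
qed

lemma strip_coord_diff_le_d_S:
  assumes "z \<in> strip" "w \<in> strip"
  shows "\<bar>strip_coord (Re w) - strip_coord (Re z)\<bar> \<le> d_S z w"
  unfolding d_S_def using linepath_in_strip_curves[OF assms]
  by (intro cINF_greatest strip_coord_diff_le_hyp_length) auto

lemma d_S_of_real:
  assumes "\<bar>x\<bar> < 1" "\<bar>y\<bar> < 1"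
  shows "d_S (of_real x) (of_real y) = \<bar>strip_coord y - strip_coord x\<bar>"
proof (rule antisym)
  have in_strip: "complex_of_real x \<in> strip" "complex_of_real y \<in> strip"
    using assms by (simp_all add: mem_strip_iff)
  have "bdd_below (hyp_length ` strip_curves (of_real x) (of_real y))"
    using strip_coord_diff_le_hyp_length by (rule bdd_belowI2)
  then have "d_S (of_real x) (of_real y) \<le> hyp_length (linepath (of_real x) (of_real y))"
    unfolding d_S_def using linepath_in_strip_curves[OF in_strip] by (rule cINF_lower)
  also have "\<dots> \<le> \<bar>strip_coord y - strip_coord x\<bar>"
    using assms by (rule hyp_length_real_linepath_le)
  finally show "d_S (of_real x) (of_real y) \<le> \<bar>strip_coord y - strip_coord x\<bar>" .
  show "\<bar>strip_coord y - strip_coord x\<bar> \<le> d_S (of_real x) (of_real y)"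
    using strip_coord_diff_le_d_S[OF in_strip] by simp
qed

lemma strip_coord_sublevel:
  "{x. \<bar>x\<bar> < 1 \<and> \<bar>strip_coord x - c\<bar> \<le> L} = {strip_coord_inv (c - L) .. strip_coord_inv (c + L)}"
proof (intro set_eqI iffI)
  fix x
  assume "x \<in> {x. \<bar>x\<bar> < 1 \<and> \<bar>strip_coord x - c\<bar> \<le> L}"
  then have "\<bar>x\<bar> < 1" "c - L \<le> strip_coord x" "strip_coord x \<le> c + L"
    by auto
  then show "x \<in> {strip_coord_inv (c - L) .. strip_coord_inv (c + L)}"
    by (metis atLeastAtMost_iff strip_coord_inv_le_iff strip_coord_inv_strip_coord)
next
  fix x
  assume x: "x \<in> {strip_coord_inv (c - L) .. strip_coord_inv (c + L)}"
  then have "\<bar>x\<bar> < 1"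
    using abs_strip_coord_inv_lt_1[of "c - L"] abs_strip_coord_inv_lt_1[of "c + L"] by auto
  with x have "c - L \<le> strip_coord x" "strip_coord x \<le> c + L"
    by (metis atLeastAtMost_iff strip_coord_inv_le_iff strip_coord_inv_strip_coord)+
  with \<open>\<bar>x\<bar> < 1\<close> show "x \<in> {x. \<bar>x\<bar> < 1 \<and> \<bar>strip_coord x - c\<bar> \<le> L}"
    by auto
qed

lemma Re_strip_closed_ball:
  assumes "\<bar>b\<bar> < 1"
  shows "Re ` {z \<in> strip. d_S z (of_real b) \<le> L}
           = {strip_coord_inv (strip_coord b - L) .. strip_coord_inv (strip_coord b + L)}"
proof -
  have "Re ` {z \<in> strip. d_S z (of_real b) \<le> L}
          = {x. \<bar>x\<bar> < 1 \<and> \<bar>strip_coord x - strip_coord b\<bar> \<le> L}"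
  proof (intro equalityI subsetI)
    fix x
    assume "x \<in> Re ` {z \<in> strip. d_S z (of_real b) \<le> L}"
    then obtain z where z: "z \<in> strip" "d_S z (of_real b) \<le> L" "x = Re z"
      by blast
    have "of_real b \<in> strip"
      using assms by (simp add: mem_strip_iff)
    from strip_coord_diff_le_d_S[OF z(1) this] z
    show "x \<in> {x. \<bar>x\<bar> < 1 \<and> \<bar>strip_coord x - strip_coord b\<bar> \<le> L}"
      by (simp add: mem_strip_iff abs_minus_commute)
  next
    fix x
    assume "x \<in> {x. \<bar>x\<bar> < 1 \<and> \<bar>strip_coord x - strip_coord b\<bar> \<le> L}"
    with assms show "x \<in> Re ` {z \<in> strip. d_S z (of_real b) \<le> L}"
      by (intro image_eqI[of _ _ "of_real x"])
         (auto simp: d_S_of_real abs_minus_commute mem_strip_iff)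
  qed
  then show ?thesis
    by (simp add: strip_coord_sublevel)
qed

lemma strip_coord_inv_add_artanh:
  assumes "\<bar>u\<bar> < 1" "\<bar>v\<bar> < 1"
  shows "strip_coord_inv (2 * artanh u + 2 * artanh v) = 4 / pi * arctan ((u + v) / (1 + u * v))"
proof -
  have "(2 * artanh u + 2 * artanh v) / 2 = artanh u + artanh v"
    by simp
  then show ?thesis
    by (simp only: strip_coord_inv_def tanh_artanh_add[OF assms])
qed

theorem lemma3:
  fixes r b :: real
  assumes "0 < r" "r < 1" "-1 < b" "b < 1"
  defines "a \<equiv> tan (b * pi / 4)"
  shows "Re ` {z \<in> strip. d_S z (complex_of_real b) \<le> ln ((1 + r) / (1 - r))}
         = {4 / pi * arctan ((a - r) / (1 - a * r)) .. 4 / pi * arctan ((a + r) / (1 + a * r))}"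
proof -
  have b: "\<bar>b\<bar> < 1" and r: "\<bar>r\<bar> < 1" "\<bar>-r\<bar> < 1"
    using assms(1-4) by auto
  have a: "\<bar>a\<bar> < 1"
    using abs_tan_quarter_pi_lt_1[OF b] by (simp add: a_def mult.commute)
  have "strip_coord b = 2 * artanh a"
    by (simp add: strip_coord_def a_def mult.commute)
  moreover have "ln ((1 + r) / (1 - r)) = 2 * artanh r"
    by (simp add: artanh_def)
  moreover have "strip_coord_inv (2 * artanh a - 2 * artanh r)
                   = 4 / pi * arctan ((a - r) / (1 - a * r))"
    using strip_coord_inv_add_artanh[OF a r(2)] r by simp
  moreover note strip_coord_inv_add_artanh[OF a r(1)]
  ultimately show ?thesis
    using Re_strip_closed_ball[OF b] by simp
qed

end
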